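(* Let $\phi:\mathbb{R}^n\to\mathbb{R}\cup\{+\infty\}$ be proper, lsc and convex, and $\mu=\mu(\phi)$. Let $(x^-,\chi,\varepsilon)\in\mathrm{dom}\,\phi\times[0,1)\times\mathbb{R}_{++}$ and let $(x,y,\Gamma,\lambda)\in\mathrm{dom}\,\phi\times\mathrm{dom}\,\phi\times\{\text{proper lsc convex functions}\}\times\mathbb{R}_{++}$ satisfy $\Gamma\le\phi$, \[ \phi(y)+\frac{\chi}{2\lambda}\|y-x^-\|^2-\min_{u\in\mathbb{R}^n}\left\{\Gamma(u)+\frac1{2\lambda}\|u-x^-\|^2\right\}\le\varepsilon,\qquad x=\mathrm{argmin}_{u\in\mathbb{R}^n}\left\{\Gamma(u)+\frac1{2\lambda}\|u-x^-\|^2\right\}. \] Assume further that $\Gamma$ is $\nu$-convex for some $\nu\in[0,\mu]$. Then for every $u\in\mathbb{R}^n$, \[ 2\lambda[\phi(y)-\phi(u)]\le\frac{2\lambda\varepsilon}{1-\chi}+\|x^--u\|^2-(1+\sigma)\|x-u\|^2,\qquad \sigma:=\frac{\lambda[\nu(1+\mu\lambda)+\chi(\mu-\nu)]}{1+\mu\lambda+\chi\lambda(\nu-\mu)}. \]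
   Context: For a proper convex function $\psi$, $\mu(\psi)$ is the largest $\mu\ge0$ such that $\psi-\frac\mu2\|\cdot\|^2$ is convex. A function $\Gamma$ is $\nu$-convex if $\Gamma(\alpha a+(1-\alpha)b)\le\alpha\Gamma(a)+(1-\alpha)\Gamma(b)-\frac{\alpha(1-\alpha)\nu}{2}\|a-b\|^2$ for all $a,b\in\mathrm{dom}\,\Gamma$, $\alpha\in[0,1]$. *)

theory Defs
  imports "HOL-Analysis.Analysis"
begin

definition edom :: "('a \<Rightarrow> ereal) \<Rightarrow> 'a set" where
  "edom f = {x. f x < \<infinity>}"

definition proper_fun :: "('a \<Rightarrow> ereal) \<Rightarrow> bool" where
  "proper_fun f \<longleftrightarrow> (\<forall>x. f x \<noteq> -\<infinity>) \<and> (\<exists>x. f x \<noteq> \<infinity>)"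

definition lsc_fun :: "('a::topological_space \<Rightarrow> ereal) \<Rightarrow> bool" where
  "lsc_fun f \<longleftrightarrow> (\<forall>x. f x \<le> Liminf (at x) f)"

definition econvex :: "('a::real_vector \<Rightarrow> ereal) \<Rightarrow> bool" where
  "econvex f \<longleftrightarrow> convex (edom f) \<and> convex_on (edom f) (\<lambda>x. real_of_ereal (f x))"

text \<open>psi - (m/2) norm^2 is convex (the subtraction leaves +infinity values unchanged).\<close>
definition convex_minus_quad :: "('a::real_normed_vector \<Rightarrow> ereal) \<Rightarrow> real \<Rightarrow> bool" where
  "convex_minus_quad f m \<longleftrightarrow>
     econvex (\<lambda>x. f x - ereal (m / 2 * (norm x)\<^sup>2))"

definition is_mu :: "('a::real_normed_vector \<Rightarrow> ereal) \<Rightarrow> real \<Rightarrow> bool" where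
  "is_mu f mu \<longleftrightarrow> mu \<ge> 0 \<and> convex_minus_quad f mu \<and>
     (\<forall>m\<ge>0. convex_minus_quad f m \<longrightarrow> m \<le> mu)"

definition nu_convex :: "('a::real_normed_vector \<Rightarrow> ereal) \<Rightarrow> real \<Rightarrow> bool" where
  "nu_convex G nu \<longleftrightarrow>
     (\<forall>a\<in>edom G. \<forall>b\<in>edom G. \<forall>\<alpha>\<in>{0..1}.
        G (\<alpha> *\<^sub>R a + (1 - \<alpha>) *\<^sub>R b)
          \<le> ereal \<alpha> * G a + ereal (1 - \<alpha>) * G b
             - ereal (\<alpha> * (1 - \<alpha>) * nu / 2 * (norm (a - b))\<^sup>2))"

end

theory Submission
  imports Defs
begin

text \<open>
  Compare everything at the convex combination \<open>w = (1 - \<chi>) u + \<chi> y\<close>. Since \<open>\<Gamma>\<close> is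
  \<open>\<nu>\<close>-convex, the prox objective \<open>\<Gamma> + \<parallel>\<cdot> - x\<^sup>-\<parallel>\<^sup>2/(2\<lambda>)\<close> is \<open>(\<nu> + 1/\<lambda>)\<close>-strongly convex,
  so it grows quadratically away from its minimiser \<open>x\<close>; since \<open>\<Gamma> \<le> \<phi>\<close> and \<open>\<phi>\<close> is
  \<open>\<mu>\<close>-strongly convex, its value at \<open>w\<close> is at most the \<open>(1 - \<chi>, \<chi>)\<close>-combination of the
  values of \<open>\<phi> + \<parallel>\<cdot> - x\<^sup>-\<parallel>\<^sup>2/(2\<lambda>)\<close> at \<open>u\<close> and \<open>y\<close>, minus a multiple of \<open>\<parallel>u - y\<parallel>\<^sup>2\<close>.
  Together with the gap inequality this bounds \<open>(1 - \<chi>)(\<phi>(y) - \<phi>(u))\<close> up to a quadratic form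
  in \<open>y - u\<close> and \<open>u - x\<close>, and minimising that form over \<open>y - u\<close> produces the factor \<open>1 + \<sigma>\<close>.
\<close>

definition strongly_convex_on :: "'a::real_normed_vector set \<Rightarrow> ('a \<Rightarrow> real) \<Rightarrow> real \<Rightarrow> bool" where
  "strongly_convex_on C f c \<longleftrightarrow> convex C \<and>
     (\<forall>a\<in>C. \<forall>b\<in>C. \<forall>t\<in>{0..1}.
        f (t *\<^sub>R a + (1 - t) *\<^sub>R b) \<le> t * f a + (1 - t) * f b - t * (1 - t) * c / 2 * (norm (a - b))\<^sup>2)"

lemma strongly_convex_onD:
  assumes "strongly_convex_on C f c" "a \<in> C" "b \<in> C" "0 \<le> t" "t \<le> 1"
  shows "f (t *\<^sub>R a + (1 - t) *\<^sub>R b) \<le> t * f a + (1 - t) * f b - t * (1 - t) * c / 2 * (norm (a - b))\<^sup>2"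
  using assms unfolding strongly_convex_on_def by auto

lemma strongly_convex_on_eq:
  assumes f: "strongly_convex_on C f c" and eq: "\<And>x. x \<in> C \<Longrightarrow> f x = g x"
  shows "strongly_convex_on C g c"
  unfolding strongly_convex_on_def
proof (intro conjI ballI)
  show "convex C" using f unfolding strongly_convex_on_def by simp
  fix a b and t :: real assume ab: "a \<in> C" "b \<in> C" and t: "t \<in> {0..1}"
  then have "t *\<^sub>R a + (1 - t) *\<^sub>R b \<in> C"
    using \<open>convex C\<close> convexD[of C a b t "1 - t"] by simp
  with ab t show "g (t *\<^sub>R a + (1 - t) *\<^sub>R b) \<le> t * g a + (1 - t) * g b - t * (1 - t) * c / 2 * (norm (a - b))\<^sup>2"
    using strongly_convex_onD[OF f ab, of t] by (simp add: eq)
qed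

lemma norm_convex_comb_diff_sq:
  fixes a b z :: "'a::real_inner"
  shows "(norm (t *\<^sub>R a + (1 - t) *\<^sub>R b - z))\<^sup>2
    = t * (norm (a - z))\<^sup>2 + (1 - t) * (norm (b - z))\<^sup>2 - t * (1 - t) * (norm (a - b))\<^sup>2"
proof -
  have "t *\<^sub>R a + (1 - t) *\<^sub>R b - z = t *\<^sub>R (a - z) + (1 - t) *\<^sub>R (b - z)"
    "a - b = (a - z) - (b - z)"
    by (simp_all add: algebra_simps)
  then show ?thesis
    unfolding power2_norm_eq_inner
    by (simp add: inner_add_left inner_add_right inner_diff_left inner_diff_right
        inner_commute[of "b - z" "a - z"] power2_eq_square algebra_simps)
qed

lemma convex_on_imp_strongly_convex_on_0:
  "convex_on C f \<Longrightarrow> strongly_convex_on C f 0"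
  unfolding strongly_convex_on_def
proof (intro conjI ballI)
  assume f: "convex_on C f"
  then show "convex C" by (rule convex_on_imp_convex)
  fix a b and t :: real assume "a \<in> C" "b \<in> C" "t \<in> {0..1}"
  then show "f (t *\<^sub>R a + (1 - t) *\<^sub>R b) \<le> t * f a + (1 - t) * f b - t * (1 - t) * 0 / 2 * (norm (a - b))\<^sup>2"
    using convex_onD[OF f, of "1 - t" a b] by simp
qed

lemma strongly_convex_on_add_sq_dist:
  fixes z :: "'a::real_inner"
  assumes "strongly_convex_on C f c"
  shows "strongly_convex_on C (\<lambda>x. f x + k * (norm (x - z))\<^sup>2) (c + 2 * k)"
  unfolding strongly_convex_on_def
proof (intro conjI ballI)
  show "convex C" using assms unfolding strongly_convex_on_def by simp
  fix a b and t :: real assume "a \<in> C" "b \<in> C" "t \<in> {0..1}"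
  then show "f (t *\<^sub>R a + (1 - t) *\<^sub>R b) + k * (norm (t *\<^sub>R a + (1 - t) *\<^sub>R b - z))\<^sup>2
    \<le> t * (f a + k * (norm (a - z))\<^sup>2) + (1 - t) * (f b + k * (norm (b - z))\<^sup>2)
       - t * (1 - t) * (c + 2 * k) / 2 * (norm (a - b))\<^sup>2"
    using strongly_convex_onD[OF assms, of a b t]
    unfolding norm_convex_comb_diff_sq by (simp add: field_simps)
qed

lemma strongly_convex_on_minimum_growth:
  assumes f: "strongly_convex_on C f c" and "x \<in> C" "w \<in> C"
    and min: "\<And>v. v \<in> C \<Longrightarrow> f x \<le> f v"
  shows "f x + c / 2 * (norm (w - x))\<^sup>2 \<le> f w"
proof -
  have "s * (c / 2 * (norm (w - x))\<^sup>2) \<le> f w - f x" if s: "0 < s" "s < 1" for s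
  proof -
    define t where "t = 1 - s"
    have t: "0 < t" "t \<le> 1" using s by (auto simp: t_def)
    have "t *\<^sub>R w + (1 - t) *\<^sub>R x \<in> C"
      using f \<open>x \<in> C\<close> \<open>w \<in> C\<close> t unfolding strongly_convex_on_def by (simp add: convexD)
    then have "f x \<le> t * f w + (1 - t) * f x - t * (1 - t) * c / 2 * (norm (w - x))\<^sup>2"
      using min strongly_convex_onD[OF f \<open>w \<in> C\<close> \<open>x \<in> C\<close>, of t] t by force
    then have "t * (s * (c / 2 * (norm (w - x))\<^sup>2)) \<le> t * (f w - f x)"
      by (simp add: t_def algebra_simps)
    then show ?thesis using t by simp
  qed
  then have "c / 2 * (norm (w - x))\<^sup>2 \<le> f w - f x"
    by (rule field_le_mult_one_interval)
  then show ?thesis by simp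
qed

lemma norm_weighted_sum_lower_bound:
  fixes p q :: "'a::real_inner"
  assumes "0 \<le> A" "0 \<le> B" "0 \<le> c" "0 < A + B * c"
  shows "A * B / (A + B * c) * (norm p)\<^sup>2 \<le> c * A * (norm q)\<^sup>2 + B * (norm (p + c *\<^sub>R q))\<^sup>2"
proof -
  \<comment> \<open>The defect is a square: the bound is attained at \<open>q = - (B / (A + B c)) p\<close>.\<close>
  have "(A + B * c) * (c * A * (norm q)\<^sup>2 + B * (norm (p + c *\<^sub>R q))\<^sup>2) - A * B * (norm p)\<^sup>2
      = c * (norm ((A + B * c) *\<^sub>R q + B *\<^sub>R p))\<^sup>2"
    unfolding power2_norm_eq_inner
    by (simp add: inner_add_left inner_add_right inner_commute[of q p] power2_eq_square algebra_simps)
  moreover have "0 \<le> c * (norm ((A + B * c) *\<^sub>R q + B *\<^sub>R p))\<^sup>2"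
    using assms by simp
  ultimately have "A * B * (norm p)\<^sup>2 \<le> (A + B * c) * (c * A * (norm q)\<^sup>2 + B * (norm (p + c *\<^sub>R q))\<^sup>2)"
    by linarith
  then show ?thesis
    using assms(4) by (simp add: pos_divide_le_eq mult.commute)
qed

lemma prox_sigma_closed_form:
  fixes chi lam mu nu :: real
  assumes "(1 - chi) * (1 + mu * lam) + chi * (1 + nu * lam) \<noteq> 0"
  shows "1 + lam * (nu * (1 + mu * lam) + chi * (mu - nu)) / (1 + mu * lam + chi * lam * (nu - mu))
    = (1 + mu * lam) * (1 + nu * lam) / ((1 - chi) * (1 + mu * lam) + chi * (1 + nu * lam))"
proof -
  have "(1 - chi) * (1 + mu * lam) + chi * (1 + nu * lam) = 1 + mu * lam + chi * lam * (nu - mu)"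
    by (simp add: algebra_simps)
  with assms show ?thesis by (simp add: field_simps)
qed

lemma inexact_prox_descent_at_combination:
  fixes Phi G :: "'a::real_inner \<Rightarrow> real"
  assumes Phi: "strongly_convex_on C Phi mu" and "u \<in> C" "y \<in> C"
    and G_le: "\<And>w. w \<in> C \<Longrightarrow> G w \<le> Phi w"
    and growth: "\<And>w. w \<in> C \<Longrightarrow> G x + 1 / (2 * lam) * (norm (x - xm))\<^sup>2 + (nu + 1 / lam) / 2 * (norm (w - x))\<^sup>2
                                   \<le> G w + 1 / (2 * lam) * (norm (w - xm))\<^sup>2"
    and gap: "Phi y + chi / (2 * lam) * (norm (y - xm))\<^sup>2 - (G x + 1 / (2 * lam) * (norm (x - xm))\<^sup>2) \<le> eps"
    and "0 \<le> chi" "chi \<le> 1"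
  shows "(1 - chi) * (Phi y - Phi u) \<le> eps + (1 - chi) / (2 * lam) * (norm (u - xm))\<^sup>2
           - (chi * ((1 - chi) * (mu + 1 / lam)) * (norm (y - u))\<^sup>2
              + (nu + 1 / lam) * (norm (u - x + chi *\<^sub>R (y - u)))\<^sup>2) / 2"
proof -
  define w where "w = (1 - chi) *\<^sub>R u + chi *\<^sub>R y"
  have "w \<in> C"
    using Phi \<open>u \<in> C\<close> \<open>y \<in> C\<close> \<open>0 \<le> chi\<close> \<open>chi \<le> 1\<close> convexD[of C u y "1 - chi" chi]
    unfolding strongly_convex_on_def w_def by simp
  have "Phi w + 1 / (2 * lam) * (norm (w - xm))\<^sup>2
      \<le> (1 - chi) * (Phi u + 1 / (2 * lam) * (norm (u - xm))\<^sup>2) + chi * (Phi y + 1 / (2 * lam) * (norm (y - xm))\<^sup>2)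
         - (1 - chi) * chi * (mu + 2 * (1 / (2 * lam))) / 2 * (norm (u - y))\<^sup>2"
    using strongly_convex_onD[OF strongly_convex_on_add_sq_dist[OF Phi], of u y "1 - chi" "1 / (2 * lam)" xm]
      \<open>u \<in> C\<close> \<open>y \<in> C\<close> \<open>0 \<le> chi\<close> \<open>chi \<le> 1\<close> unfolding w_def by simp
  moreover have "Phi y + chi / (2 * lam) * (norm (y - xm))\<^sup>2 - eps + (nu + 1 / lam) / 2 * (norm (w - x))\<^sup>2
      \<le> Phi w + 1 / (2 * lam) * (norm (w - xm))\<^sup>2"
    using growth[OF \<open>w \<in> C\<close>] gap G_le[OF \<open>w \<in> C\<close>] by simp
  moreover have "w - x = u - x + chi *\<^sub>R (y - u)"
    unfolding w_def by (simp add: algebra_simps)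
  ultimately show ?thesis
    by (simp add: norm_minus_commute field_simps)
qed

lemma inexact_prox_descent:
  fixes Phi G :: "'a::real_inner \<Rightarrow> real"
  assumes Phi: "strongly_convex_on C Phi mu" and "u \<in> C" "y \<in> C"
    and G_le: "\<And>w. w \<in> C \<Longrightarrow> G w \<le> Phi w"
    and growth: "\<And>w. w \<in> C \<Longrightarrow> G x + 1 / (2 * lam) * (norm (x - xm))\<^sup>2 + (nu + 1 / lam) / 2 * (norm (w - x))\<^sup>2
                                   \<le> G w + 1 / (2 * lam) * (norm (w - xm))\<^sup>2"
    and gap: "Phi y + chi / (2 * lam) * (norm (y - xm))\<^sup>2 - (G x + 1 / (2 * lam) * (norm (x - xm))\<^sup>2) \<le> eps"
    and chi: "0 \<le> chi" "chi < 1" and "0 < lam" "0 \<le> mu" "0 \<le> nu"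
  shows "2 * lam * (Phi y - Phi u) \<le> 2 * lam * eps / (1 - chi) + (norm (xm - u))\<^sup>2
           - (1 + lam * (nu * (1 + mu * lam) + chi * (mu - nu))
                / (1 + mu * lam + chi * lam * (nu - mu))) * (norm (x - u))\<^sup>2"
proof -
  define D where "D = (1 - chi) * (1 + mu * lam) + chi * (1 + nu * lam)"
  define rho where "rho = (1 + mu * lam) * (1 + nu * lam) / D"
  have "0 < D"
    using chi \<open>0 < lam\<close> \<open>0 \<le> mu\<close> \<open>0 \<le> nu\<close> unfolding D_def
    by (intro add_pos_nonneg mult_pos_pos mult_nonneg_nonneg) auto
  have den: "(1 - chi) * (mu + 1 / lam) + (nu + 1 / lam) * chi = D / lam"
    using \<open>0 < lam\<close> unfolding D_def by (simp add: field_simps)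
  have "(1 - chi) * rho / lam
      = (1 - chi) * (mu + 1 / lam) * (nu + 1 / lam) / ((1 - chi) * (mu + 1 / lam) + (nu + 1 / lam) * chi)"
    unfolding den using \<open>0 < lam\<close> \<open>0 < D\<close> unfolding rho_def by (simp add: field_simps)
  also have "\<dots> * (norm (u - x))\<^sup>2 \<le> chi * ((1 - chi) * (mu + 1 / lam)) * (norm (y - u))\<^sup>2
                                    + (nu + 1 / lam) * (norm (u - x + chi *\<^sub>R (y - u)))\<^sup>2"
    using \<open>0 < lam\<close> \<open>0 < D\<close> chi \<open>0 \<le> mu\<close> \<open>0 \<le> nu\<close>
    by (intro norm_weighted_sum_lower_bound) (auto simp: den)
  finally have "(1 - chi) * rho / lam * (norm (u - x))\<^sup>2 / 2
      \<le> (chi * ((1 - chi) * (mu + 1 / lam)) * (norm (y - u))\<^sup>2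
         + (nu + 1 / lam) * (norm (u - x + chi *\<^sub>R (y - u)))\<^sup>2) / 2"
    by (rule divide_right_mono) simp
  with inexact_prox_descent_at_combination[OF Phi \<open>u \<in> C\<close> \<open>y \<in> C\<close> G_le growth gap] chi
  have "(1 - chi) * (Phi y - Phi u)
      \<le> eps + (1 - chi) / (2 * lam) * (norm (u - xm))\<^sup>2 - (1 - chi) * rho / lam * (norm (u - x))\<^sup>2 / 2"
    by linarith
  also have "\<dots> = (1 - chi) * (eps / (1 - chi) + (norm (u - xm))\<^sup>2 / (2 * lam) - rho / (2 * lam) * (norm (u - x))\<^sup>2)"
    using chi by (simp add: field_simps)
  finally have "Phi y - Phi u \<le> eps / (1 - chi) + (norm (u - xm))\<^sup>2 / (2 * lam) - rho / (2 * lam) * (norm (u - x))\<^sup>2"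
    using chi by simp
  then have "2 * lam * (Phi y - Phi u)
      \<le> 2 * lam * (eps / (1 - chi) + (norm (u - xm))\<^sup>2 / (2 * lam) - rho / (2 * lam) * (norm (u - x))\<^sup>2)"
    using \<open>0 < lam\<close> by (simp add: mult_left_mono)
  also have "\<dots> = 2 * lam * eps / (1 - chi) + (norm (xm - u))\<^sup>2 - rho * (norm (x - u))\<^sup>2"
    using \<open>0 < lam\<close> by (simp add: field_simps norm_minus_commute)
  finally show ?thesis
    unfolding rho_def D_def prox_sigma_closed_form[OF \<open>0 < D\<close>[unfolded D_def, THEN less_imp_neq, symmetric]] .
qed

lemma proper_fun_finite_on_edom:
  assumes "proper_fun f" "x \<in> edom f"
  shows "f x = ereal (real_of_ereal (f x))"
  using assms unfolding proper_fun_def edom_def by (cases "f x") auto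

lemma edom_minus_ereal: "edom (\<lambda>x. f x - ereal (g x)) = edom f"
  unfolding edom_def
proof (rule Collect_cong)
  fix x show "f x - ereal (g x) < \<infinity> \<longleftrightarrow> f x < \<infinity>" by (cases "f x") auto
qed

lemma is_mu_imp_strongly_convex_on:
  fixes f :: "'a::real_inner \<Rightarrow> ereal"
  assumes f: "proper_fun f" and "is_mu f mu"
  shows "strongly_convex_on (edom f) (\<lambda>x. real_of_ereal (f x)) mu"
proof -
  have "edom (\<lambda>x. f x - ereal (mu / 2 * (norm x)\<^sup>2)) = edom f"
    by (rule edom_minus_ereal)
  then have "convex_on (edom f) (\<lambda>x. real_of_ereal (f x - ereal (mu / 2 * (norm x)\<^sup>2)))"
    using \<open>is_mu f mu\<close> unfolding is_mu_def convex_minus_quad_def econvex_def by simp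
  from strongly_convex_on_add_sq_dist[OF convex_on_imp_strongly_convex_on_0[OF this], of "mu / 2" 0]
  have "strongly_convex_on (edom f)
      (\<lambda>x. real_of_ereal (f x - ereal (mu / 2 * (norm x)\<^sup>2)) + mu / 2 * (norm (x - 0))\<^sup>2) mu"
    by simp
  moreover have "real_of_ereal (f x - ereal (mu / 2 * (norm x)\<^sup>2)) + mu / 2 * (norm (x - 0))\<^sup>2
      = real_of_ereal (f x)" if "x \<in> edom f" for x
    by (subst proper_fun_finite_on_edom[OF f that]) simp
  ultimately show ?thesis
    by (rule strongly_convex_on_eq)
qed

lemma nu_convex_imp_strongly_convex_on:
  fixes G :: "'a::real_normed_vector \<Rightarrow> ereal"
  assumes G: "proper_fun G" "econvex G" and "nu_convex G nu"
  shows "strongly_convex_on (edom G) (\<lambda>x. real_of_ereal (G x)) nu"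
  unfolding strongly_convex_on_def
proof (intro conjI ballI)
  show "convex (edom G)" using G unfolding econvex_def by simp
  fix a b and t :: real assume ab: "a \<in> edom G" "b \<in> edom G" and t: "t \<in> {0..1}"
  let ?c = "t *\<^sub>R a + (1 - t) *\<^sub>R b"
  obtain ra rb where ra: "G a = ereal ra" and rb: "G b = ereal rb"
    using proper_fun_finite_on_edom[OF G(1)] ab by metis
  have "G ?c \<le> ereal t * G a + ereal (1 - t) * G b - ereal (t * (1 - t) * nu / 2 * (norm (a - b))\<^sup>2)"
    using \<open>nu_convex G nu\<close> ab t unfolding nu_convex_def by blast
  then have le: "G ?c \<le> ereal (t * ra + (1 - t) * rb - t * (1 - t) * nu / 2 * (norm (a - b))\<^sup>2)"
    by (simp add: ra rb)
  then have "?c \<in> edom G"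
    unfolding edom_def by (auto intro: le_less_trans)
  with le show "real_of_ereal (G ?c) \<le> t * real_of_ereal (G a) + (1 - t) * real_of_ereal (G b)
                       - t * (1 - t) * nu / 2 * (norm (a - b))\<^sup>2"
    using proper_fun_finite_on_edom[OF G(1)] by (metis ra rb ereal_less_eq(3) real_of_ereal.simps(1))
qed

lemma prox_argmin_quadratic_growth:
  fixes Gam :: "'a::real_inner \<Rightarrow> ereal"
  assumes Gam: "proper_fun Gam" "econvex Gam" "nu_convex Gam nu"
    and "x \<in> edom Gam" "w \<in> edom Gam"
    and argmin: "\<And>u. Gam x + ereal (k * (norm (x - xm))\<^sup>2) \<le> Gam u + ereal (k * (norm (u - xm))\<^sup>2)"
  shows "real_of_ereal (Gam x) + k * (norm (x - xm))\<^sup>2 + (nu + 2 * k) / 2 * (norm (w - x))\<^sup>2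
    \<le> real_of_ereal (Gam w) + k * (norm (w - xm))\<^sup>2"
proof (rule strongly_convex_on_minimum_growth[OF _ \<open>x \<in> edom Gam\<close> \<open>w \<in> edom Gam\<close>])
  show "strongly_convex_on (edom Gam) (\<lambda>v. real_of_ereal (Gam v) + k * (norm (v - xm))\<^sup>2) (nu + 2 * k)"
    by (rule strongly_convex_on_add_sq_dist[OF nu_convex_imp_strongly_convex_on[OF Gam]])
  fix v assume "v \<in> edom Gam"
  with argmin[of v] show "real_of_ereal (Gam x) + k * (norm (x - xm))\<^sup>2 \<le> real_of_ereal (Gam v) + k * (norm (v - xm))\<^sup>2"
    using proper_fun_finite_on_edom[OF Gam(1)] \<open>x \<in> edom Gam\<close> by (metis plus_ereal.simps(1) ereal_less_eq(3))
qed

theorem proposition3p1: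
  fixes phi Gam :: "'a::euclidean_space \<Rightarrow> ereal"
    and xm x y :: 'a and chi eps lam mu nu :: real
  assumes phi_prop: "proper_fun phi" "lsc_fun phi" "econvex phi"
    and mu_def: "is_mu phi mu"
    and xm: "xm \<in> edom phi"
    and chi_rng: "0 \<le> chi" "chi < 1"
    and eps_pos: "0 < eps"
    and xy: "x \<in> edom phi" "y \<in> edom phi"
    and Gam_prop: "proper_fun Gam" "lsc_fun Gam" "econvex Gam"
    and lam_pos: "0 < lam"
    and Gle: "\<And>u. Gam u \<le> phi u"
    and argmin: "\<And>u. Gam x + ereal (1 / (2 * lam) * (norm (x - xm))\<^sup>2)
                    \<le> Gam u + ereal (1 / (2 * lam) * (norm (u - xm))\<^sup>2)"
    and gap: "phi y + ereal (chi / (2 * lam) * (norm (y - xm))\<^sup>2)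
               - (INF u. Gam u + ereal (1 / (2 * lam) * (norm (u - xm))\<^sup>2)) \<le> ereal eps"
    and nu_rng: "0 \<le> nu" "nu \<le> mu" "nu_convex Gam nu"
  shows "\<forall>u. ereal (2 * lam) * (phi y - phi u)
           \<le> ereal (2 * lam * eps / (1 - chi) + (norm (xm - u))\<^sup>2
               - (1 + lam * (nu * (1 + mu * lam) + chi * (mu - nu))
                     / (1 + mu * lam + chi * lam * (nu - mu))) * (norm (x - u))\<^sup>2)"
proof (intro allI, goal_cases)
  case (1 u)
  define Phi where "Phi v = real_of_ereal (phi v)" for v
  define G where "G v = real_of_ereal (Gam v)" for v
  have phi_real: "phi v = ereal (Phi v)" if "v \<in> edom phi" for v
    using proper_fun_finite_on_edom[OF phi_prop(1) that] unfolding Phi_def .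
  have G_real: "Gam v = ereal (G v)" if "v \<in> edom Gam" for v
    using proper_fun_finite_on_edom[OF Gam_prop(1) that] unfolding G_def .
  have dom_sub: "edom phi \<subseteq> edom Gam"
    unfolding edom_def using Gle le_less_trans by blast
  with xy have "x \<in> edom Gam" by auto
  have "(INF v. Gam v + ereal (1 / (2 * lam) * (norm (v - xm))\<^sup>2)) = Gam x + ereal (1 / (2 * lam) * (norm (x - xm))\<^sup>2)"
    using argmin by (intro antisym INF_lower INF_greatest) auto
  with gap have gap_real: "Phi y + chi / (2 * lam) * (norm (y - xm))\<^sup>2 - (G x + 1 / (2 * lam) * (norm (x - xm))\<^sup>2) \<le> eps"
    using phi_real[OF xy(2)] G_real[OF \<open>x \<in> edom Gam\<close>] by simp
  have G_le_Phi: "G w \<le> Phi w" if "w \<in> edom phi" for w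
    using Gle[of w] phi_real[OF that] G_real that dom_sub by auto
  have growth: "G x + 1 / (2 * lam) * (norm (x - xm))\<^sup>2 + (nu + 1 / lam) / 2 * (norm (w - x))\<^sup>2
      \<le> G w + 1 / (2 * lam) * (norm (w - xm))\<^sup>2" if "w \<in> edom phi" for w
    using prox_argmin_quadratic_growth[OF Gam_prop(1,3) nu_rng(3) \<open>x \<in> edom Gam\<close> _ argmin, of w]
      that dom_sub unfolding G_def by auto
  show ?case
  proof (cases "u \<in> edom phi")
    case False
    then show ?thesis using phi_real[OF xy(2)] lam_pos by (simp add: edom_def)
  next
    case True
    from inexact_prox_descent[OF is_mu_imp_strongly_convex_on[OF phi_prop(1) mu_def, folded Phi_def]
        True xy(2) G_le_Phi growth gap_real chi_rng lam_pos _ nu_rng(1)]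
    show ?thesis using phi_real[OF True] phi_real[OF xy(2)] mu_def by (simp add: is_mu_def)
  qed
qed

end
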